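(* Consider the most-profitable-augmenting-path algorithm (described in the context) run on an instance of the maximum-weight online bipartite left-perfect matching problem with budget $k=4$. Then for each $v\in R$, the loss $\ell^t_v$ is non-decreasing in $t$ for $t=1,\dots,n+1$.
   Context: Problem: $G=(L\cup R,E)$ is a complete bipartite graph with $n:=|L|\le|R|$ and edge weights $w:E\to\mathbb{Q}_{\ge0}$. The algorithm initially knows $R$; at timestep $t=1,\dots,n$ the vertex $u_t\in L$ arrives with all incident edges and their weights. At the end of each timestep the algorithm outputs a left-perfect matching of the revealed graph (every arrived vertex of $L$ matched), obtainable from the previous one (empty initially) by at most $4$ (re)assignments (the number of vertices of nonzero degree in the symmetric difference of the two matchings); matched vertices stay matched. Algorithm: when $u_t$ arrives, among all augmenting paths with respect to the current matching $M$ that contain $u_t$ and have length at most $3$, choose one $P$ maximizing the weight of $M\triangle P$ minus the weight of $M$, and output $M\triangle P$. Notation: $M_t$ is the matching at the beginning of timestep $t$ (output at time $t-1$; $M_1=\emptyset$, $M_{n+1}$ is the final matching); $R^t_{\mathsf{exp}}$ is the set of vertices of $R$ not covered by $M_t$; $M_t(v)$ is the partner of $v$ in $M_t$. For $v\in R$, the loss $\ell^t_v:=w(M_t(v),v)-\max_{v'\in R^t_{\mathsf{exp}}}w(M_t(v),v')$ if $v$ is matched in $M_t$, and $\ell^t_v:=0$ otherwise, with the convention $\max\emptyset:=0$. *)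

theory Defs
  imports Complex_Main
begin

text \<open>Matchings are sets of edges (l, r) with l in L (type 'a) and r in R (type 'b).
  The graph is complete bipartite, so every pair is an edge.\<close>

definition weight :: "('a \<Rightarrow> 'b \<Rightarrow> rat) \<Rightarrow> ('a \<times> 'b) set \<Rightarrow> rat" where
  "weight w M = (\<Sum>e\<in>M. w (fst e) (snd e))"

definition symdiff :: "'c set \<Rightarrow> 'c set \<Rightarrow> 'c set" where
  "symdiff A B = (A - B) \<union> (B - A)"

text \<open>Edge sets of the augmenting paths w.r.t. M of length at most 3 that contain the
  (unmatched) left vertex u.  Since u is unmatched it is an endpoint; the other endpoint
  is an unmatched right vertex; paths in a bipartite graph between the two sides have odd
  length, so the length is 1 (u - r) or 3 (u - r1 - u' - r2 with (u',r1) in M).\<close>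

definition aug_paths :: "'b set \<Rightarrow> ('a \<times> 'b) set \<Rightarrow> 'a \<Rightarrow> ('a \<times> 'b) set set" where
  "aug_paths R M u =
     (if u \<in> Domain M then {} else
       {{(u, r)} | r. r \<in> R \<and> r \<notin> Range M}
       \<union> {{(u, r1), (u', r1), (u', r2)} | u' r1 r2.
            (u', r1) \<in> M \<and> r1 \<in> R \<and> r2 \<in> R \<and> r2 \<notin> Range M})"

definition gain :: "('a \<Rightarrow> 'b \<Rightarrow> rat) \<Rightarrow> ('a \<times> 'b) set \<Rightarrow> ('a \<times> 'b) set \<Rightarrow> rat" where
  "gain w M P = weight w (symdiff M P) - weight w M"

text \<open>One step of the algorithm (ties broken arbitrarily).\<close>
definition alg_step :: "('a \<Rightarrow> 'b \<Rightarrow> rat) \<Rightarrow> 'b set \<Rightarrow> ('a \<times> 'b) set \<Rightarrow> 'a \<Rightarrow> ('a \<times> 'b) set \<Rightarrow> bool" where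
  "alg_step w R M u M' \<longleftrightarrow>
     (\<exists>P\<in>aug_paths R M u. M' = symdiff M P \<and>
        (\<forall>Q\<in>aug_paths R M u. gain w M Q \<le> gain w M P))"

definition max0 :: "('b \<Rightarrow> rat) \<Rightarrow> 'b set \<Rightarrow> rat" where
  "max0 f S = (if S = {} then 0 else Max (f ` S))"

definition partner :: "('a \<times> 'b) set \<Rightarrow> 'b \<Rightarrow> 'a" where
  "partner M v = (THE a. (a, v) \<in> M)"

definition R_exp :: "'b set \<Rightarrow> ('a \<times> 'b) set \<Rightarrow> 'b set" where
  "R_exp R M = R - Range M"

definition loss :: "('a \<Rightarrow> 'b \<Rightarrow> rat) \<Rightarrow> 'b set \<Rightarrow> ('a \<times> 'b) set \<Rightarrow> 'b \<Rightarrow> rat" where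
  "loss w R M v = (if v \<in> Range M
      then w (partner M v) v - max0 (w (partner M v)) (R_exp R M)
      else 0)"

end

theory Submission
  imports Defs
begin

text \<open>A step of the algorithm either matches the arriving vertex \<open>u\<close> to an exposed vertex \<open>r\<close>,
  or moves some \<open>u'\<close> from \<open>r1\<close> to an exposed vertex \<open>r2\<close> and matches \<open>u\<close> to \<open>r1\<close>. In both cases
  the set of exposed vertices only shrinks, so the loss of a vertex keeping its partner can only
  grow. The newly covered vertex had loss 0, and its new loss is nonnegative because the chosen
  path beats every path that ends elsewhere in the exposed set. For \<open>r1\<close>, comparing the chosen
  path with the single edges from \<open>u\<close> to exposed vertices bounds the new loss from below by the
  old one.\<close>

lemma partner_eq:
  assumes "single_valued (M\<inverse>)" "(a, v) \<in> M"
  shows "partner M v = a"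
  using assms unfolding partner_def single_valued_def by (intro the_equality) auto

lemma max0_upper: "finite S \<Longrightarrow> x \<in> S \<Longrightarrow> f x \<le> max0 f S"
  unfolding max0_def by auto

lemma max0_least: "finite S \<Longrightarrow> (\<And>x. x \<in> S \<Longrightarrow> f x \<le> c) \<Longrightarrow> 0 \<le> c \<Longrightarrow> max0 f S \<le> c"
  unfolding max0_def by auto

lemma max0_nonneg: "finite S \<Longrightarrow> (\<And>x. 0 \<le> f x) \<Longrightarrow> 0 \<le> max0 f S"
  unfolding max0_def by (auto intro: order_trans[OF _ Max_ge])

lemma finite_R_exp: "finite R \<Longrightarrow> finite (R_exp R M)"
  unfolding R_exp_def by simp

lemma loss_unmatched: "v \<notin> Range M \<Longrightarrow> loss w R M v = 0"
  unfolding loss_def by simp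

lemma loss_matched:
  assumes "single_valued (M\<inverse>)" "(a, v) \<in> M"
  shows "loss w R M v = w a v - max0 (w a) (R_exp R M)"
  using assms partner_eq[OF assms] unfolding loss_def by auto

text \<open>The partner of \<open>v\<close> changes from \<open>b\<close> to \<open>a\<close>; the hypotheses say that, measured by \<open>w a\<close>,
  no vertex that stays exposed beats \<open>v\<close> by more than \<open>v\<close>'s old loss.\<close>

lemma loss_le_after_rematch:
  assumes "finite R" "single_valued (M\<inverse>)" "single_valued (M'\<inverse>)" "(b, v) \<in> M" "(a, v) \<in> M'"
    and "\<And>x. x \<in> R_exp R M' \<Longrightarrow> w a x \<le> w a v - w b v + max0 (w b) (R_exp R M)"
    and "0 \<le> w a v - w b v + max0 (w b) (R_exp R M)"
  shows "loss w R M v \<le> loss w R M' v"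
proof -
  have "max0 (w a) (R_exp R M') \<le> w a v - w b v + max0 (w b) (R_exp R M)"
    using assms(1,6,7) by (intro max0_least finite_R_exp)
  then show ?thesis
    using loss_matched[OF assms(2,4)] loss_matched[OF assms(3,5)] by simp
qed

lemma loss_le_keep_partner:
  assumes "finite R" "\<And>b. 0 \<le> w a b" "single_valued (M\<inverse>)" "single_valued (M'\<inverse>)"
    and "(a, v) \<in> M" "(a, v) \<in> M'" "R_exp R M' \<subseteq> R_exp R M"
  shows "loss w R M v \<le> loss w R M' v"
  using assms finite_R_exp[OF assms(1)]
  by (intro loss_le_after_rematch[of R M M' a v a]) (auto intro: max0_upper max0_nonneg)

lemma loss_le_newly_matched:
  assumes "finite R" "single_valued (M'\<inverse>)" "v \<notin> Range M" "(a, v) \<in> M'"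
    and "\<And>x. x \<in> R_exp R M' \<Longrightarrow> w a x \<le> w a v" "0 \<le> w a v"
  shows "loss w R M v \<le> loss w R M' v"
proof -
  have "max0 (w a) (R_exp R M') \<le> w a v"
    using assms(1,5,6) by (intro max0_least finite_R_exp)
  then show ?thesis
    using loss_unmatched[OF assms(3)] loss_matched[OF assms(2,4)] by simp
qed

lemma symdiff_single_edge: "e \<notin> M \<Longrightarrow> symdiff M {e} = insert e M"
  unfolding symdiff_def by auto

lemma symdiff_path3:
  assumes "(u', r1) \<in> M" "(u, r1) \<notin> M" "(u', r2) \<notin> M" "u \<noteq> u'" "r1 \<noteq> r2"
  shows "symdiff M {(u, r1), (u', r1), (u', r2)} = insert (u, r1) (insert (u', r2) (M - {(u', r1)}))"
  using assms unfolding symdiff_def by auto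

lemma gain_single_edge:
  assumes "finite M" "(u, r) \<notin> M"
  shows "gain w M {(u, r)} = w u r"
  using assms unfolding gain_def weight_def symdiff_single_edge[OF assms(2)] by simp

lemma gain_path3:
  assumes "finite M" "(u', r1) \<in> M" "(u, r1) \<notin> M" "(u', r2) \<notin> M" "u \<noteq> u'" "r1 \<noteq> r2"
  shows "gain w M {(u, r1), (u', r1), (u', r2)} = w u r1 + w u' r2 - w u' r1"
proof -
  have "weight w (M - {(u', r1)}) = weight w M - w u' r1"
    using assms unfolding weight_def by (simp add: sum_diff1)
  then show ?thesis
    using assms unfolding gain_def symdiff_path3[OF assms(2-6)] weight_def by simp
qed

text \<open>The inequalities compare the chosen path with the single edges from \<open>u\<close> and, for a path
  of length 3, with the other reroutings of \<open>u'\<close>.\<close>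

lemma alg_step_cases:
  assumes "finite M" "u \<notin> Domain M" "alg_step w R M u M'"
  obtains (single_edge) r where "r \<in> R_exp R M" "M' = insert (u, r) M"
      "\<And>x. x \<in> R_exp R M \<Longrightarrow> w u x \<le> w u r"
  | (path3) u' r1 r2 where "(u', r1) \<in> M" "r1 \<in> R" "r2 \<in> R_exp R M"
      "M' = insert (u, r1) (insert (u', r2) (M - {(u', r1)}))"
      "\<And>x. x \<in> R_exp R M \<Longrightarrow> w u x \<le> w u r1 + w u' r2 - w u' r1"
      "\<And>x. x \<in> R_exp R M \<Longrightarrow> w u' x \<le> w u' r2"
proof -
  obtain P where P: "P \<in> aug_paths R M u" and M': "M' = symdiff M P"
    and opt: "\<And>Q. Q \<in> aug_paths R M u \<Longrightarrow> gain w M Q \<le> gain w M P"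
    using assms(3) unfolding alg_step_def by blast
  have edge_path: "{(u, x)} \<in> aug_paths R M u" if "x \<in> R_exp R M" for x
    using that assms(2) unfolding aug_paths_def R_exp_def by auto
  have long_path: "{(u, r1), (u', r1), (u', x)} \<in> aug_paths R M u"
    if "x \<in> R_exp R M" "(u', r1) \<in> M" "r1 \<in> R" for x u' r1
  proof -
    have "{(u, r1), (u', r1), (u', x)} \<in> {{(u, r1), (u', r1), (u', r2)} | u' r1 r2.
        (u', r1) \<in> M \<and> r1 \<in> R \<and> r2 \<in> R \<and> r2 \<notin> Range M}"
      using that unfolding R_exp_def by blast
    then show ?thesis
      using assms(2) unfolding aug_paths_def by simp
  qed
  have edge_gain: "gain w M {(u, x)} = w u x" for x
    using assms(1,2) by (intro gain_single_edge) auto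
  have long_gain: "gain w M {(u, r1), (u', r1), (u', x)} = w u r1 + w u' x - w u' r1"
    if "x \<in> R_exp R M" "(u', r1) \<in> M" for x u' r1
    using that assms(1,2) unfolding R_exp_def by (intro gain_path3) auto
  from P assms(2) consider
      r where "r \<in> R_exp R M" "P = {(u, r)}"
    | u' r1 r2 where "(u', r1) \<in> M" "r1 \<in> R" "r2 \<in> R_exp R M" "P = {(u, r1), (u', r1), (u', r2)}"
    unfolding aug_paths_def R_exp_def by auto
  then show thesis
  proof cases
    case (1 r)
    show thesis
    proof (rule single_edge)
      have "(u, r) \<notin> M"
        using assms(2) by auto
      then show "M' = insert (u, r) M"
        using M' 1 by (simp add: symdiff_single_edge)
      show "w u x \<le> w u r" if "x \<in> R_exp R M" for x
        using opt[OF edge_path[OF that]] 1 edge_gain by simp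
    qed (use 1 in simp)
  next
    case (2 u' r1 r2)
    show thesis
    proof (rule path3)
      show "M' = insert (u, r1) (insert (u', r2) (M - {(u', r1)}))"
        using M' 2 assms(2) by (auto simp: symdiff_def R_exp_def)
      show "w u x \<le> w u r1 + w u' r2 - w u' r1" if "x \<in> R_exp R M" for x
        using opt[OF edge_path[OF that]] 2 edge_gain long_gain by simp
      show "w u' x \<le> w u' r2" if "x \<in> R_exp R M" for x
        using opt[OF long_path[OF that 2(1,2)]] 2 long_gain[OF that 2(1)] long_gain by simp
    qed (use 2 in simp_all)
  qed
qed

lemma alg_step_matching:
  assumes "finite M" "single_valued (M\<inverse>)" "u \<notin> Domain M" "alg_step w R M u M'"
  shows "finite M'" "single_valued (M'\<inverse>)" "Domain M' = insert u (Domain M)"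
  using assms(1-3)
  by (cases rule: alg_step_cases[OF assms(1,3,4)]; force simp: single_valued_def R_exp_def)+

lemma alg_step_loss_mono:
  assumes "finite R" "\<And>a b. 0 \<le> w a b" "finite M" "single_valued (M\<inverse>)" "u \<notin> Domain M"
    and "alg_step w R M u M'"
  shows "loss w R M v \<le> loss w R M' v"
proof -
  have sv': "single_valued (M'\<inverse>)"
    using alg_step_matching[OF assms(3-6)] by simp
  show ?thesis
  proof (cases rule: alg_step_cases[OF assms(3,5,6), case_names single_edge path3])
    case (single_edge r)
    have exp': "R_exp R M' = R_exp R M - {r}"
      using single_edge(2) unfolding R_exp_def by auto
    have "(u, r) \<in> M'" "r \<notin> Range M"
      using single_edge(1,2) unfolding R_exp_def by auto
    consider "v = r" | a where "(a, v) \<in> M" | "v \<notin> Range M'"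
      using single_edge(2) by auto
    then show ?thesis
    proof cases
      case 1
      then show ?thesis
        using single_edge(3) assms(1,2) sv' \<open>(u, r) \<in> M'\<close> \<open>r \<notin> Range M\<close>
        by (intro loss_le_newly_matched[of R M' v M u]) (auto simp: exp')
    next
      case (2 a)
      then show ?thesis
        using single_edge(2) assms sv' exp' by (intro loss_le_keep_partner[of R w a M M' v]) auto
    next
      case 3
      then show ?thesis
        using single_edge(2) by (simp add: loss_unmatched)
    qed
  next
    case (path3 u' r1 r2)
    have exp': "R_exp R M' = R_exp R M - {r2}"
      using path3(1,4) unfolding R_exp_def by auto
    have "r2 \<notin> Range M" "u \<noteq> u'"
      using path3(1,3) assms(5) unfolding R_exp_def by auto
    consider "v = r2" | "v = r1" | a where "(a, v) \<in> M" "v \<noteq> r1" | "v \<notin> Range M'"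
      using path3(4) by auto
    then show ?thesis
    proof cases
      case 1
      then show ?thesis
        using path3 assms(1,2) sv' exp' \<open>r2 \<notin> Range M\<close> \<open>u \<noteq> u'\<close>
        by (intro loss_le_newly_matched[of R M' v M u']) auto
    next
      case 2
      have "w u' r2 \<le> max0 (w u') (R_exp R M)"
        using path3(3) assms(1) by (intro max0_upper finite_R_exp)
      moreover have "0 \<le> w u r2"
        using assms(2) .
      ultimately show ?thesis
        using 2 path3 assms(1,4) sv' exp'
        by (intro loss_le_after_rematch[of R M M' u' v u]) (fastforce dest: path3(5))+
    next
      case (3 a)
      then show ?thesis
        using path3(4) assms sv' exp' by (intro loss_le_keep_partner[of R w a M M' v]) auto
    next
      case 4
      then have "v \<notin> Range M"
        using path3(4) by auto
      then show ?thesis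
        using 4 by (simp add: loss_unmatched)
    qed
  qed
qed

lemma alg_run_matching:
  assumes "inj_on u {1..n}" "M 1 = {}"
    and "\<And>t. 1 \<le> t \<Longrightarrow> t \<le> n \<Longrightarrow> alg_step w R (M t) (u t) (M (Suc t))"
    and "1 \<le> t" "t \<le> n + 1"
  shows "finite (M t) \<and> single_valued ((M t)\<inverse>) \<and> Domain (M t) = u ` {1..<t}"
  using assms(4,5)
proof (induction t rule: dec_induct)
  case base
  then show ?case using assms(2) by (simp add: single_valued_def)
next
  case (step t)
  have "u t \<notin> u ` {1..<t}"
    using step.hyps step.prems by (subst inj_on_image_mem_iff[OF assms(1)]) auto
  then show ?case
    using step alg_step_matching[OF _ _ _ assms(3)] by (auto simp: atLeastLessThanSuc)
qed

theorem lemma4: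
  fixes w :: "'a \<Rightarrow> 'b \<Rightarrow> rat"
    and R :: "'b set"
    and u :: "nat \<Rightarrow> 'a"
    and n :: nat
    and M :: "nat \<Rightarrow> ('a \<times> 'b) set"
  assumes "finite R"
    and "n \<le> card R"
    and "inj_on u {1..n}"
    and "\<And>a b. w a b \<ge> 0"
    and "M 1 = {}"
    and "\<And>t. 1 \<le> t \<Longrightarrow> t \<le> n \<Longrightarrow> alg_step w R (M t) (u t) (M (Suc t))"
  shows "\<forall>v\<in>R. \<forall>t s. 1 \<le> t \<longrightarrow> t \<le> s \<longrightarrow> s \<le> n + 1 \<longrightarrow>
           loss w R (M t) v \<le> loss w R (M s) v"
proof (intro ballI allI impI)
  \<comment> \<open>\<open>n \<le> card R\<close> only guarantees that the run exists.\<close>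
  fix v t s
  assume "1 \<le> t" "t \<le> s" "s \<le> n + 1"
  have step_mono: "loss w R (M t) v \<le> loss w R (M (Suc t)) v" if "1 \<le> t" "t \<le> n" for t
  proof -
    have "u t \<notin> u ` {1..<t}"
      using that by (subst inj_on_image_mem_iff[OF assms(3)]) auto
    then show ?thesis
      using alg_run_matching[OF assms(3,5,6), of t] that
      by (intro alg_step_loss_mono[OF assms(1,4) _ _ _ assms(6)]) auto
  qed
  from \<open>t \<le> s\<close> \<open>s \<le> n + 1\<close> show "loss w R (M t) v \<le> loss w R (M s) v"
  proof (induction s rule: dec_induct)
    case (step s)
    then show ?case using \<open>1 \<le> t\<close> step_mono[of s] by simp
  qed simp
qed

end
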